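(* In the interpolating system described in the context, for any fixed $a>\epsilon>0$ (and fixed $t\in[0,1]$), $$\int_\epsilon^a du\;\mathbb E\bigl\langle|L(x)-\langle L(x)\rangle_{t,u}|\bigr\rangle_{t,u}=O\Bigl(\frac{1}{\sqrt K}\Bigr)\quad\text{as }K\to\infty .$$
   Context: Let $K,N$ with $K/N=\beta$ fixed, $\sigma^2>0$, $B=\sigma^{-2}$, $m\in[0,1]$, $\lambda=B/(1+\beta B(1-m))$; $B(t),\lambda(t)$ continuously differentiable on $[0,1]$ with $B(0)=0,\lambda(0)=\lambda,B(1)=B,\lambda(1)=0$, $B$ increasing, $\lambda$ decreasing, $\frac{B(t)}{1+\beta B(t)(1-m)}+\lambda(t)=\lambda$. Random data: $n\in\mathbb R^N$, $w,h\in\mathbb R^K$ i.i.d. $\mathcal N(0,1)$ entries, $N\times K$ matrix $s$ i.i.d. $\mathcal N(0,1)$, independent; $\mathbb E$ is expectation over them. For $x\in\{\pm1\}^K$: $z=\mathbf 1-x$, $h_u(x)=\sqrt u\sum_kh_kx_k+u\sum_kx_k-\sqrt u\sum_k|h_k|$; Gibbs measure $p_{t,u}(x)\propto\exp\bigl(-\frac12\|n+N^{-1/2}B(t)^{1/2}sz\|^2-\frac12\|w+\lambda(t)^{1/2}z\|^2+h_u(x)\bigr)$ with average $\langle\cdot\rangle_{t,u}$. $L(x)=\frac1K\frac{1}{2\sqrt u}\sum_kh_kx_k+\frac1K\sum_kx_k$. *)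

theory Defs
  imports "HOL-Probability.Probability"
begin

definition std_gauss :: "real measure" where
  "std_gauss = density lborel std_normal_density"

definition gauss_vec :: "nat \<Rightarrow> (nat \<Rightarrow> real) measure" where
  "gauss_vec n = PiM {..<n} (\<lambda>_. std_gauss)"

definition gauss_mat :: "nat \<Rightarrow> nat \<Rightarrow> (nat \<times> nat \<Rightarrow> real) measure" where
  "gauss_mat N K = PiM ({..<N} \<times> {..<K}) (\<lambda>_. std_gauss)"

definition data_measure :: "nat \<Rightarrow> nat \<Rightarrow>
    ((nat \<Rightarrow> real) \<times> (nat \<Rightarrow> real) \<times> (nat \<Rightarrow> real) \<times> (nat \<times> nat \<Rightarrow> real)) measure" where
  "data_measure K N = gauss_vec N \<Otimes>\<^sub>M (gauss_vec K \<Otimes>\<^sub>M (gauss_vec K \<Otimes>\<^sub>M gauss_mat N K))"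

definition configs :: "nat \<Rightarrow> (nat \<Rightarrow> real) set" where
  "configs K = {..<K} \<rightarrow>\<^sub>E {-1, 1}"

definition h_u :: "nat \<Rightarrow> real \<Rightarrow> (nat \<Rightarrow> real) \<Rightarrow> (nat \<Rightarrow> real) \<Rightarrow> real" where
  "h_u K u h x = sqrt u * (\<Sum>k<K. h k * x k) + u * (\<Sum>k<K. x k) - sqrt u * (\<Sum>k<K. \<bar>h k\<bar>)"

text \<open>Unnormalised Gibbs weight of p_{t,u}; Bt = B(t), lt = lambda(t), z = 1 - x.\<close>
definition gibbs_weight :: "nat \<Rightarrow> nat \<Rightarrow> real \<Rightarrow> real \<Rightarrow> real \<Rightarrow>
    (nat \<Rightarrow> real) \<Rightarrow> (nat \<Rightarrow> real) \<Rightarrow> (nat \<Rightarrow> real) \<Rightarrow> (nat \<times> nat \<Rightarrow> real) \<Rightarrow>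
    (nat \<Rightarrow> real) \<Rightarrow> real" where
  "gibbs_weight K N Bt lt u n w h s x =
     exp (- (1/2) * (\<Sum>i<N. (n i + sqrt Bt / sqrt (real N) * (\<Sum>k<K. s (i, k) * (1 - x k)))\<^sup>2)
          - (1/2) * (\<Sum>k<K. (w k + sqrt lt * (1 - x k))\<^sup>2)
          + h_u K u h x)"

definition gibbs_avg :: "nat \<Rightarrow> nat \<Rightarrow> real \<Rightarrow> real \<Rightarrow> real \<Rightarrow>
    (nat \<Rightarrow> real) \<Rightarrow> (nat \<Rightarrow> real) \<Rightarrow> (nat \<Rightarrow> real) \<Rightarrow> (nat \<times> nat \<Rightarrow> real) \<Rightarrow>
    ((nat \<Rightarrow> real) \<Rightarrow> real) \<Rightarrow> real" where
  "gibbs_avg K N Bt lt u n w h s f =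
     (\<Sum>x\<in>configs K. f x * gibbs_weight K N Bt lt u n w h s x)
     / (\<Sum>x\<in>configs K. gibbs_weight K N Bt lt u n w h s x)"

definition L_obs :: "nat \<Rightarrow> real \<Rightarrow> (nat \<Rightarrow> real) \<Rightarrow> (nat \<Rightarrow> real) \<Rightarrow> real" where
  "L_obs K u h x = (1 / real K) * (1 / (2 * sqrt u)) * (\<Sum>k<K. h k * x k) + (1 / real K) * (\<Sum>k<K. x k)"

definition fluct :: "nat \<Rightarrow> nat \<Rightarrow> real \<Rightarrow> real \<Rightarrow> real \<Rightarrow> real" where
  "fluct K N Bt lt u =
     integral\<^sup>L (data_measure K N) (\<lambda>(n, w, h, s).
        gibbs_avg K N Bt lt u n w h s
          (\<lambda>x. \<bar>L_obs K u h x - gibbs_avg K N Bt lt u n w h s (L_obs K u h)\<bar>))"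

definition C1_on :: "real set \<Rightarrow> (real \<Rightarrow> real) \<Rightarrow> bool" where
  "C1_on S f \<longleftrightarrow> (\<exists>f'. continuous_on S f' \<and> (\<forall>t\<in>S. (f has_real_derivative f' t) (at t within S)))"

end

theory Submission
  imports Defs
begin

text \<open>Fix the disorder and write the energy as A + \<surd>u P + u Q - \<surd>u S with P x = h\<cdot>x,
  Q x = \<Sum>x_k and S = |h|_1, so that K L = D_u := P/(2\<surd>u) + Q. The derivative
  \<psi>(u) = \<langle>D_u\<rangle> - S/(2\<surd>u) of log Z has \<psi>'(u) = Var(D_u) + \<langle>(S - P)/(4u\<surd>u)\<rangle> \<ge> Var(D_u).
  By AM-GM, \<langle>|L - \<langle>L\<rangle>|\<rangle> \<le> Var(D_u)/(2K\<surd>K) + 1/(2\<surd>K), so the integral over [\<epsilon>, a] is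
  at most (\<psi>(a) - \<psi>(\<epsilon>))/(2K\<surd>K) + (a - \<epsilon>)/(2\<surd>K). As |P| \<le> S and |Q| \<le> K, the boundary
  term is O((K + S/\<surd>\<epsilon>)/(K\<surd>K)), and averaging over the disorder with E S \<le> K gives O(1/\<surd>K).\<close>

definition gibbs_mean :: "'a set \<Rightarrow> ('a \<Rightarrow> real) \<Rightarrow> ('a \<Rightarrow> real) \<Rightarrow> real" where
  "gibbs_mean X H f = (\<Sum>x\<in>X. f x * exp (H x)) / (\<Sum>x\<in>X. exp (H x))"

locale gibbs_states =
  fixes X :: "'a set"
  assumes finite_states: "finite X" and states_nonempty: "X \<noteq> {}"
begin

lemma partition_function_pos: "0 < (\<Sum>x\<in>X. exp (H x :: real))"
  using finite_states states_nonempty by (simp add: sum_pos)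

lemma gibbs_mean_mono:
  "(\<And>x. x \<in> X \<Longrightarrow> f x \<le> g x) \<Longrightarrow> gibbs_mean X H f \<le> gibbs_mean X H g"
  unfolding gibbs_mean_def using partition_function_pos[of H]
  by (intro divide_right_mono sum_mono mult_right_mono) auto

lemma gibbs_mean_add: "gibbs_mean X H (\<lambda>x. f x + g x) = gibbs_mean X H f + gibbs_mean X H g"
  unfolding gibbs_mean_def by (simp add: sum.distrib distrib_right add_divide_distrib)

lemma gibbs_mean_diff: "gibbs_mean X H (\<lambda>x. f x - g x) = gibbs_mean X H f - gibbs_mean X H g"
  unfolding gibbs_mean_def by (simp add: sum_subtractf left_diff_distrib diff_divide_distrib)

lemma gibbs_mean_uminus: "gibbs_mean X H (\<lambda>x. - f x) = - gibbs_mean X H f"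
  unfolding gibbs_mean_def by (simp add: sum_negf)

lemma gibbs_mean_cmult: "gibbs_mean X H (\<lambda>x. c * f x) = c * gibbs_mean X H f"
  unfolding gibbs_mean_def by (simp add: sum_distrib_left mult.assoc)

lemma gibbs_mean_divide: "gibbs_mean X H (\<lambda>x. f x / c) = gibbs_mean X H f / c"
  using gibbs_mean_cmult[of H "1 / c" f] by (simp add: mult.commute)

lemma gibbs_mean_const: "gibbs_mean X H (\<lambda>x. c) = c"
  unfolding gibbs_mean_def using partition_function_pos[of H]
  by (simp add: sum_distrib_left[symmetric])

lemma gibbs_mean_nonneg: "(\<And>x. x \<in> X \<Longrightarrow> 0 \<le> f x) \<Longrightarrow> 0 \<le> gibbs_mean X H f"
  using gibbs_mean_mono[of "\<lambda>_. 0" f H] by (simp add: gibbs_mean_const)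

lemma gibbs_mean_abs_le: "(\<And>x. x \<in> X \<Longrightarrow> \<bar>f x\<bar> \<le> M) \<Longrightarrow> \<bar>gibbs_mean X H f\<bar> \<le> M"
  using gibbs_mean_mono[of f "\<lambda>_. M" H] gibbs_mean_mono[of "\<lambda>_. - M" f H]
  by (force simp: gibbs_mean_const abs_le_iff)

lemma gibbs_covariance:
  "gibbs_mean X H (\<lambda>x. f x * g x) - gibbs_mean X H f * gibbs_mean X H g
     = gibbs_mean X H (\<lambda>x. (f x - gibbs_mean X H f) * (g x - gibbs_mean X H g))"
proof -
  define mf mg where "mf = gibbs_mean X H f" and "mg = gibbs_mean X H g"
  have "gibbs_mean X H (\<lambda>x. (f x - mf) * (g x - mg))
      = gibbs_mean X H (\<lambda>x. f x * g x - (mg * f x + mf * g x) + mf * mg)"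
    by (simp add: algebra_simps)
  also have "\<dots> = gibbs_mean X H (\<lambda>x. f x * g x) - mf * mg"
    by (simp add: gibbs_mean_add gibbs_mean_diff gibbs_mean_cmult gibbs_mean_const mf_def mg_def)
  finally show ?thesis by (simp add: mf_def mg_def)
qed

lemma gibbs_mean_has_real_derivative:
  assumes H: "\<And>x. x \<in> X \<Longrightarrow> ((\<lambda>u. H u x) has_real_derivative H' x) (at u)"
    and f: "\<And>x. x \<in> X \<Longrightarrow> ((\<lambda>u. f u x) has_real_derivative f' x) (at u)"
  shows "((\<lambda>u. gibbs_mean X (H u) (f u)) has_real_derivative
           gibbs_mean X (H u) f' + gibbs_mean X (H u)
             (\<lambda>x. (f u x - gibbs_mean X (H u) (f u)) * (H' x - gibbs_mean X (H u) H'))) (at u)"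
proof -
  define Z where "Z u = (\<Sum>x\<in>X. exp (H u x))" for u
  define Y where "Y u = (\<Sum>x\<in>X. f u x * exp (H u x))" for u
  have dZ: "(Z has_real_derivative (\<Sum>x\<in>X. H' x * exp (H u x))) (at u)"
    unfolding Z_def[abs_def] using H
    by (intro DERIV_sum) (auto intro!: derivative_eq_intros simp: mult.commute)
  have dY: "(Y has_real_derivative (\<Sum>x\<in>X. (f' x + f u x * H' x) * exp (H u x))) (at u)"
    unfolding Y_def[abs_def] using H f
    by (intro DERIV_sum) (auto intro!: derivative_eq_intros simp: algebra_simps)
  have Z: "Z u \<noteq> 0" using partition_function_pos unfolding Z_def by (metis less_irrefl)
  have "(\<lambda>u. gibbs_mean X (H u) (f u)) = (\<lambda>u. Y u / Z u)"
    by (simp add: gibbs_mean_def Y_def Z_def)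
  moreover have "((\<lambda>u. Y u / Z u) has_real_derivative
          gibbs_mean X (H u) (\<lambda>x. f' x + f u x * H' x) - gibbs_mean X (H u) (f u) * gibbs_mean X (H u) H') (at u)"
    using DERIV_divide[OF dY dZ Z]
    by (rule DERIV_cong) (use Z in \<open>simp add: gibbs_mean_def Y_def Z_def field_simps power2_eq_square\<close>)
  ultimately show ?thesis
    by (simp add: gibbs_mean_add gibbs_covariance[symmetric] add_diff_eq)
qed

end

locale linear_field_family = gibbs_states X for X :: "'a set" +
  fixes A P Q :: "'a \<Rightarrow> real" and S :: real
begin

definition energy :: "real \<Rightarrow> 'a \<Rightarrow> real" where
  "energy u x = A x + sqrt u * P x + u * Q x - sqrt u * S"

abbreviation mean :: "real \<Rightarrow> ('a \<Rightarrow> real) \<Rightarrow> real" where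
  "mean u \<equiv> gibbs_mean X (energy u)"

definition drift :: "real \<Rightarrow> 'a \<Rightarrow> real" where
  "drift u x = P x / (2 * sqrt u) + Q x"

definition variance :: "real \<Rightarrow> real" where
  "variance u = mean u (\<lambda>x. (drift u x - mean u (drift u))\<^sup>2)"

definition psi :: "real \<Rightarrow> real" where
  "psi u = mean u (drift u) - S / (2 * sqrt u)"

definition psi' :: "real \<Rightarrow> real" where
  "psi' u = variance u + mean u (\<lambda>x. (S - P x) / (4 * u * sqrt u))"

lemma psi_has_real_derivative:
  assumes u: "0 < u"
  shows "(psi has_real_derivative psi' u) (at u)"
proof -
  define c where "c = S / (2 * sqrt u)"
  have dE: "((\<lambda>u. energy u x) has_real_derivative drift u x - c) (at u)" for x
    unfolding energy_def drift_def c_def using u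
    by (auto intro!: derivative_eq_intros simp: field_simps)
  have dD: "((\<lambda>u. drift u x) has_real_derivative - P x / (4 * u * sqrt u)) (at u)" for x
    unfolding drift_def using u
    by (auto intro!: derivative_eq_intros simp: field_simps power2_eq_square)
  have dc: "((\<lambda>u. S / (2 * sqrt u)) has_real_derivative - S / (4 * u * sqrt u)) (at u)"
    using u by (auto intro!: derivative_eq_intros simp: field_simps power2_eq_square)
  have "(psi has_real_derivative
          mean u (\<lambda>x. - P x / (4 * u * sqrt u))
          + mean u (\<lambda>x. (drift u x - mean u (drift u)) * (drift u x - c - mean u (\<lambda>x. drift u x - c)))
          - - S / (4 * u * sqrt u)) (at u)"
    unfolding psi_def[abs_def]
    by (intro DERIV_diff gibbs_mean_has_real_derivative dE dD dc)
  moreover have "mean u (\<lambda>x. - P x / (4 * u * sqrt u)) + S / (4 * u * sqrt u)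
      = mean u (\<lambda>x. (S - P x) / (4 * u * sqrt u))"
    using gibbs_mean_diff[where f="\<lambda>_. S / (4 * u * sqrt u)" and g="\<lambda>x. P x / (4 * u * sqrt u)"]
    by (simp add: gibbs_mean_const gibbs_mean_uminus diff_divide_distrib)
  moreover have "mean u (\<lambda>x. (drift u x - mean u (drift u)) * (drift u x - c - mean u (\<lambda>x. drift u x - c)))
      = variance u"
    by (simp add: variance_def gibbs_mean_diff gibbs_mean_const power2_eq_square)
  ultimately show ?thesis
    unfolding psi'_def by (simp add: algebra_simps)
qed

lemma variance_le_psi':
  assumes "0 < u" and "\<And>x. x \<in> X \<Longrightarrow> P x \<le> S"
  shows "variance u \<le> psi' u"
  unfolding psi'_def using assms by (auto intro!: gibbs_mean_nonneg)

lemma mean_abs_deviation_le: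
  assumes k: "0 < k" and u: "0 < u" and PS: "\<And>x. x \<in> X \<Longrightarrow> P x \<le> S"
  shows "mean u (\<lambda>x. \<bar>drift u x / k - mean u (drift u) / k\<bar>) \<le> psi' u / (2 * k * sqrt k) + 1 / (2 * sqrt k)"
proof -
  define m where "m = mean u (drift u)"
  have sk: "0 < sqrt k" using k by simp
  have "mean u (\<lambda>x. \<bar>drift u x / k - m / k\<bar>) \<le> mean u (\<lambda>x. (drift u x - m)\<^sup>2 / (2 * k * sqrt k) + 1 / (2 * sqrt k))"
  proof (rule gibbs_mean_mono)
    fix x
    have "2 * sqrt k * \<bar>drift u x - m\<bar> \<le> (drift u x - m)\<^sup>2 + k"
      using sum_squares_bound[of "\<bar>drift u x - m\<bar>" "sqrt k"] k by (simp add: power2_eq_square algebra_simps)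
    then show "\<bar>drift u x / k - m / k\<bar> \<le> (drift u x - m)\<^sup>2 / (2 * k * sqrt k) + 1 / (2 * sqrt k)"
      using k sk by (simp add: field_simps abs_divide flip: diff_divide_distrib)
  qed
  also have "\<dots> = variance u / (2 * k * sqrt k) + 1 / (2 * sqrt k)"
    using gibbs_mean_cmult[where c="1 / (2 * k * sqrt k)" and f="\<lambda>x. (drift u x - m)\<^sup>2"]
    by (simp add: gibbs_mean_add gibbs_mean_const variance_def m_def)
  also have "\<dots> \<le> psi' u / (2 * k * sqrt k) + 1 / (2 * sqrt k)"
    using variance_le_psi'[OF u PS] k by (simp add: divide_right_mono)
  finally show ?thesis unfolding m_def .
qed

lemma psi_increment_le:
  assumes PS: "\<And>x. x \<in> X \<Longrightarrow> \<bar>P x\<bar> \<le> S" and Qk: "\<And>x. x \<in> X \<Longrightarrow> \<bar>Q x\<bar> \<le> k"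
    and eps: "0 < \<epsilon>" "\<epsilon> \<le> a"
  shows "psi a - psi \<epsilon> \<le> 2 * k + 3 * S / (2 * sqrt \<epsilon>)"
proof -
  have S: "0 \<le> S" using PS states_nonempty by fastforce
  have mean_drift: "\<bar>mean u (drift u)\<bar> \<le> S / (2 * sqrt \<epsilon>) + k" if "\<epsilon> \<le> u" for u
  proof (rule gibbs_mean_abs_le)
    fix x assume x: "x \<in> X"
    have "\<bar>P x / (2 * sqrt u)\<bar> \<le> S / (2 * sqrt u)"
      using PS[OF x] that eps by (simp add: abs_divide divide_right_mono)
    also have "\<dots> \<le> S / (2 * sqrt \<epsilon>)"
      using that eps S by (simp add: divide_left_mono)
    finally show "\<bar>drift u x\<bar> \<le> S / (2 * sqrt \<epsilon>) + k"
      unfolding drift_def using Qk[OF x] abs_triangle_ineq[of "P x / (2 * sqrt u)" "Q x"] by linarith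
  qed
  have "0 \<le> S / (2 * sqrt a)" using S eps by simp
  then show ?thesis
    using mean_drift[of a] mean_drift[of \<epsilon>] eps unfolding psi_def by (auto simp: abs_le_iff)
qed

lemma nn_integral_mean_abs_deviation_le:
  assumes PS: "\<And>x. x \<in> X \<Longrightarrow> \<bar>P x\<bar> \<le> S" and Qk: "\<And>x. x \<in> X \<Longrightarrow> \<bar>Q x\<bar> \<le> k"
    and k: "0 < k" and eps: "0 < \<epsilon>" "\<epsilon> < a"
  shows "(\<integral>\<^sup>+u. ennreal (mean u (\<lambda>x. \<bar>drift u x / k - mean u (drift u) / k\<bar>)) * indicator {\<epsilon>..a} u \<partial>lborel)
     \<le> ennreal ((2 + 3 * S / (2 * k * sqrt \<epsilon>) + (a - \<epsilon>)) / (2 * sqrt k))"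
proof -
  define g where "g u = psi' u / (2 * k * sqrt k) + 1 / (2 * sqrt k)" for u
  define G where "G u = psi u / (2 * k * sqrt k) + u / (2 * sqrt k)" for u
  have P_le: "P x \<le> S" if "x \<in> X" for x using PS[OF that] by simp
  have g_nonneg: "0 \<le> g u" if "u \<in> {\<epsilon>..a}" for u
  proof -
    have "0 \<le> variance u" unfolding variance_def by (rule gibbs_mean_nonneg) simp
    then show ?thesis
      using variance_le_psi'[OF _ P_le, of u] that eps k unfolding g_def by simp
  qed
  have G_deriv: "(G has_real_derivative g u) (at u)" if "u \<in> {\<epsilon>..a}" for u
    unfolding G_def[abs_def] g_def using that eps
    by (intro DERIV_add DERIV_cdivide DERIV_ident psi_has_real_derivative) simp
  have g_measurable: "g \<in> borel_measurable borel"
    unfolding g_def[abs_def] psi'_def[abs_def] variance_def[abs_def] gibbs_mean_def energy_def drift_def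
    by measurable
  have "(\<integral>\<^sup>+u. ennreal (mean u (\<lambda>x. \<bar>drift u x / k - mean u (drift u) / k\<bar>)) * indicator {\<epsilon>..a} u \<partial>lborel)
      \<le> (\<integral>\<^sup>+u. ennreal (g u) * indicator {\<epsilon>..a} u \<partial>lborel)"
    using mean_abs_deviation_le[OF k _ P_le] eps unfolding g_def
    by (intro nn_integral_mono) (auto simp: indicator_def intro!: ennreal_leI)
  also have "\<dots> = ennreal (G a - G \<epsilon>)"
    using nn_integral_FTC_Icc[OF g_measurable G_deriv g_nonneg] eps by simp
  also have "\<dots> \<le> ennreal ((2 + 3 * S / (2 * k * sqrt \<epsilon>) + (a - \<epsilon>)) / (2 * sqrt k))"
  proof (rule ennreal_leI)
    have "G a - G \<epsilon> = (psi a - psi \<epsilon>) / (2 * k * sqrt k) + (a - \<epsilon>) / (2 * sqrt k)"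
      unfolding G_def by (simp add: diff_divide_distrib)
    also have "\<dots> \<le> (2 * k + 3 * S / (2 * sqrt \<epsilon>)) / (2 * k * sqrt k) + (a - \<epsilon>) / (2 * sqrt k)"
      using psi_increment_le[OF PS Qk] eps k by (simp add: divide_right_mono)
    also have "\<dots> = (2 + 3 * S / (2 * k * sqrt \<epsilon>) + (a - \<epsilon>)) / (2 * sqrt k)"
      using k eps by (simp add: field_simps)
    finally show "G a - G \<epsilon> \<le> (2 + 3 * S / (2 * k * sqrt \<epsilon>) + (a - \<epsilon>)) / (2 * sqrt k)" .
  qed
  finally show ?thesis .
qed

end

lemma finite_configs: "finite (configs K)"
  unfolding configs_def by (simp add: finite_PiE)

lemma configs_nonempty: "configs K \<noteq> {}"
  unfolding configs_def by (simp add: PiE_eq_empty_iff)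

lemma abs_config_entry: "x \<in> configs K \<Longrightarrow> k < K \<Longrightarrow> \<bar>x k\<bar> = 1"
  unfolding configs_def by (drule PiE_mem[of x "{..<K}" _ k]) auto

lemma gibbs_states_configs: "gibbs_states (configs K)"
  by unfold_locales (simp_all add: finite_configs configs_nonempty)

type_synonym disorder = "(nat \<Rightarrow> real) \<times> (nat \<Rightarrow> real) \<times> (nat \<Rightarrow> real) \<times> (nat \<times> nat \<Rightarrow> real)"

definition gibbs_fluct :: "nat \<Rightarrow> nat \<Rightarrow> real \<Rightarrow> real \<Rightarrow> real \<Rightarrow> disorder \<Rightarrow> real" where
  "gibbs_fluct K N Bt lt u = (\<lambda>(n, w, h, s). gibbs_avg K N Bt lt u n w h s
      (\<lambda>x. \<bar>L_obs K u h x - gibbs_avg K N Bt lt u n w h s (L_obs K u h)\<bar>))"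

lemma fluct_eq_integral_gibbs_fluct: "fluct K N Bt lt u = integral\<^sup>L (data_measure K N) (gibbs_fluct K N Bt lt u)"
  unfolding fluct_def gibbs_fluct_def ..

lemma gibbs_fluct_nonneg: "0 \<le> gibbs_fluct K N Bt lt u \<omega>"
  unfolding gibbs_fluct_def gibbs_avg_def gibbs_weight_def
  by (cases \<omega>) (auto intro!: divide_nonneg_nonneg sum_nonneg)

lemma nn_integral_gibbs_fluct_le:
  assumes K: "0 < K" and eps: "0 < \<epsilon>" "\<epsilon> < a"
  shows "(\<integral>\<^sup>+u. ennreal (gibbs_fluct K N Bt lt u (n, w, h, s)) * indicator {\<epsilon>..a} u \<partial>lborel)
     \<le> ennreal ((2 + 3 * (\<Sum>k<K. \<bar>h k\<bar>) / (2 * real K * sqrt \<epsilon>) + (a - \<epsilon>)) / (2 * sqrt (real K)))"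
proof -
  define A where "A x = - (1/2) * (\<Sum>i<N. (n i + sqrt Bt / sqrt (real N) * (\<Sum>k<K. s (i, k) * (1 - x k)))\<^sup>2)
      - (1/2) * (\<Sum>k<K. (w k + sqrt lt * (1 - x k))\<^sup>2)" for x :: "nat \<Rightarrow> real"
  define P where "P x = (\<Sum>k<K. h k * x k)" for x :: "nat \<Rightarrow> real"
  define Q where "Q x = (\<Sum>k<K. x k)" for x :: "nat \<Rightarrow> real"
  interpret F: linear_field_family "configs K" A P Q "\<Sum>k<K. \<bar>h k\<bar>"
    by (simp add: linear_field_family_def gibbs_states_configs)
  have avg: "gibbs_avg K N Bt lt u n w h s f = F.mean u f" for u f
    unfolding gibbs_avg_def gibbs_weight_def gibbs_mean_def F.energy_def h_u_def A_def P_def Q_def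
    by (simp add: algebra_simps)
  have L: "L_obs K u h = (\<lambda>x. F.drift u x / real K)" for u
    unfolding L_obs_def F.drift_def P_def Q_def using K by (simp add: fun_eq_iff field_simps)
  have P: "\<bar>P x\<bar> \<le> (\<Sum>k<K. \<bar>h k\<bar>)" if "x \<in> configs K" for x
    unfolding P_def using sum_abs[of "\<lambda>k. h k * x k" "{..<K}"] abs_config_entry[OF that]
    by (simp add: abs_mult)
  have Q: "\<bar>Q x\<bar> \<le> real K" if "x \<in> configs K" for x
    unfolding Q_def using sum_abs[of x "{..<K}"] abs_config_entry[OF that] by simp
  show ?thesis
    using K eps by (simp add: gibbs_fluct_def avg L F.gibbs_mean_divide F.nn_integral_mean_abs_deviation_le[OF P Q])
qed

lemma sets_std_gauss [measurable_cong, simp]: "sets std_gauss = sets borel"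
  unfolding std_gauss_def by simp

lemma prob_space_std_gauss: "prob_space std_gauss"
  unfolding std_gauss_def by (rule prob_space_normal_density) simp

lemma prob_space_gauss_vec: "prob_space (gauss_vec n)"
  unfolding gauss_vec_def by (intro prob_space_PiM prob_space_std_gauss)

lemma prob_space_gauss_mat: "prob_space (gauss_mat N K)"
  unfolding gauss_mat_def by (intro prob_space_PiM prob_space_std_gauss)

lemma prob_space_data_measure: "prob_space (data_measure K N)"
  unfolding data_measure_def
  by (intro prob_space_pair prob_space_gauss_vec prob_space_gauss_mat)

lemma measurable_gibbs_fluct:
  "(\<lambda>(u, \<omega>). gibbs_fluct K N Bt lt u \<omega>) \<in> borel_measurable (lborel \<Otimes>\<^sub>M data_measure K N)"
  unfolding gibbs_fluct_def gibbs_avg_def gibbs_weight_def h_u_def L_obs_def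
    data_measure_def gauss_vec_def gauss_mat_def
  by measurable

lemma nn_integral_abs_std_gauss: "(\<integral>\<^sup>+x. ennreal \<bar>x\<bar> \<partial>std_gauss) = ennreal (sqrt (2 / pi))"
proof -
  have "(\<integral>\<^sup>+x. ennreal \<bar>x\<bar> \<partial>std_gauss) = (\<integral>\<^sup>+x. ennreal (std_normal_density x * \<bar>x\<bar>) \<partial>lborel)"
    unfolding std_gauss_def
    by (subst nn_integral_density) (auto simp: ennreal_mult normal_density_nonneg)
  also have "\<dots> = ennreal (sqrt (2 / pi))"
    using std_normal_moment_abs_odd[of 0]
    by (subst nn_integral_eq_integral) (auto simp: has_bochner_integral_iff normal_density_nonneg)
  finally show ?thesis .
qed

lemma nn_integral_pair_prob_fst:
  assumes "prob_space M1" "prob_space M2" and [measurable]: "g \<in> borel_measurable M1"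
  shows "(\<integral>\<^sup>+\<omega>. g (fst \<omega>) \<partial>(M1 \<Otimes>\<^sub>M M2)) = (\<integral>\<^sup>+x. g x \<partial>M1)"
proof -
  interpret M2: prob_space M2 by fact
  have "(\<integral>\<^sup>+x. g x \<partial>M1) = (\<integral>\<^sup>+x. g x \<partial>distr (M1 \<Otimes>\<^sub>M M2) M1 fst)"
    by (simp add: M2.distr_pair_fst)
  also have "\<dots> = (\<integral>\<^sup>+\<omega>. g (fst \<omega>) \<partial>(M1 \<Otimes>\<^sub>M M2))"
    by (rule nn_integral_distr) auto
  finally show ?thesis by simp
qed

lemma nn_integral_pair_prob_snd:
  assumes "prob_space M1" "prob_space M2" and [measurable]: "g \<in> borel_measurable M2"
  shows "(\<integral>\<^sup>+\<omega>. g (snd \<omega>) \<partial>(M1 \<Otimes>\<^sub>M M2)) = (\<integral>\<^sup>+y. g y \<partial>M2)"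
proof -
  interpret M1: prob_space M1 by fact
  interpret M2: prob_space M2 by fact
  have "(\<integral>\<^sup>+\<omega>. g (snd \<omega>) \<partial>(M1 \<Otimes>\<^sub>M M2)) = (\<integral>\<^sup>+x. \<integral>\<^sup>+y. g (snd (x, y)) \<partial>M2 \<partial>M1)"
    by (rule M2.nn_integral_fst[symmetric]) measurable
  also have "\<dots> = (\<integral>\<^sup>+y. g y \<partial>M2)" by (simp add: M1.emeasure_space_1)
  finally show ?thesis .
qed

lemma nn_integral_data_measure_field:
  assumes [measurable]: "g \<in> borel_measurable (gauss_vec K)"
  shows "(\<integral>\<^sup>+\<omega>. g (fst (snd (snd \<omega>))) \<partial>data_measure K N) = (\<integral>\<^sup>+h. g h \<partial>gauss_vec K)"
proof -
  note prob = prob_space_gauss_vec prob_space_gauss_mat prob_space_pair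
  have "(\<integral>\<^sup>+\<omega>. g (fst (snd (snd \<omega>))) \<partial>data_measure K N)
      = (\<integral>\<^sup>+\<omega>. g (fst (snd \<omega>)) \<partial>(gauss_vec K \<Otimes>\<^sub>M (gauss_vec K \<Otimes>\<^sub>M gauss_mat N K)))"
    unfolding data_measure_def by (rule nn_integral_pair_prob_snd) (auto intro: prob)
  also have "\<dots> = (\<integral>\<^sup>+\<omega>. g (fst \<omega>) \<partial>(gauss_vec K \<Otimes>\<^sub>M gauss_mat N K))"
    by (rule nn_integral_pair_prob_snd) (auto intro: prob)
  also have "\<dots> = (\<integral>\<^sup>+h. g h \<partial>gauss_vec K)"
    by (rule nn_integral_pair_prob_fst) (auto intro: prob)
  finally show ?thesis .
qed

lemma nn_integral_l1_norm_field_le: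
  "(\<integral>\<^sup>+\<omega>. ennreal (\<Sum>k<K. \<bar>fst (snd (snd \<omega>)) k\<bar>) \<partial>data_measure K N) \<le> real K"
proof -
  have [measurable]: "(\<lambda>h. h k) \<in> borel_measurable (gauss_vec K)" if "k < K" for k
    using measurable_component_singleton[of k "{..<K}" "\<lambda>_. std_gauss"] that
    unfolding gauss_vec_def by (simp add: measurable_def)
  have coordinate: "(\<integral>\<^sup>+h. ennreal \<bar>h k\<bar> \<partial>gauss_vec K) = ennreal (sqrt (2 / pi))" if "k < K" for k
  proof -
    have "distr (gauss_vec K) std_gauss (\<lambda>h. h k) = std_gauss"
      unfolding gauss_vec_def using that by (intro distr_PiM_component prob_space_std_gauss) auto
    moreover have "(\<lambda>h. h k) \<in> measurable (gauss_vec K) std_gauss"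
      unfolding gauss_vec_def using that by (intro measurable_component_singleton) simp
    ultimately show ?thesis
      using nn_integral_distr[of "\<lambda>h. h k" "gauss_vec K" std_gauss "\<lambda>x. ennreal \<bar>x\<bar>"]
      by (simp add: nn_integral_abs_std_gauss measurable_cong_sets[OF sets_std_gauss refl])
  qed
  have "(\<integral>\<^sup>+h. ennreal (\<Sum>k<K. \<bar>h k\<bar>) \<partial>gauss_vec K) = (\<Sum>k<K. \<integral>\<^sup>+h. ennreal \<bar>h k\<bar> \<partial>gauss_vec K)"
    by (simp add: sum_ennreal[symmetric] del: sum_ennreal) (rule nn_integral_sum, simp)
  also have "\<dots> \<le> (\<Sum>k<K. 1)"
    using pi_gt3 by (intro sum_mono) (simp add: coordinate real_sqrt_le_1_iff)
  finally have "(\<integral>\<^sup>+h. ennreal (\<Sum>k<K. \<bar>h k\<bar>) \<partial>gauss_vec K) \<le> real K"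
    by (simp add: ennreal_of_nat_eq_real_of_nat)
  then show ?thesis
    by (subst nn_integral_data_measure_field) measurable
qed

lemma ennreal_integral_le_nn_integral:
  assumes "\<And>x. 0 \<le> f x"
  shows "ennreal (integral\<^sup>L M f) \<le> (\<integral>\<^sup>+x. ennreal (f x) \<partial>M)"
proof (cases "integrable M f")
  case True
  then show ?thesis using assms by (simp add: nn_integral_eq_integral)
next
  case False
  then show ?thesis by (simp add: not_integrable_integral_eq)
qed

lemma ennreal_interval_integral_le_nn_integral:
  fixes f :: "real \<Rightarrow> real" and a b :: real
  assumes "\<And>x. 0 \<le> f x" and "a \<le> b"
  shows "ennreal (LBINT x=a..b. f x) \<le> (\<integral>\<^sup>+x. ennreal (f x) * indicator {a..b} x \<partial>lborel)"
proof -
  have "ennreal (LBINT x=a..b. f x) \<le> (\<integral>\<^sup>+x. ennreal (indicator {a..b} x * f x) \<partial>lborel)"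
    using assms by (simp add: interval_integral_Icc set_lebesgue_integral_def ennreal_integral_le_nn_integral)
  also have "\<dots> = (\<integral>\<^sup>+x. ennreal (f x) * indicator {a..b} x \<partial>lborel)"
    by (intro nn_integral_cong) (simp add: indicator_def)
  finally show ?thesis .
qed

lemma (in prob_space) nn_integral_affine:
  assumes [measurable]: "f \<in> borel_measurable M" and "\<And>x. 0 \<le> f x" and "0 \<le> c0" "0 \<le> c1"
  shows "(\<integral>\<^sup>+x. ennreal (c0 + c1 * f x) \<partial>M) = ennreal c0 + ennreal c1 * (\<integral>\<^sup>+x. ennreal (f x) \<partial>M)"
proof -
  have "(\<integral>\<^sup>+x. ennreal (c0 + c1 * f x) \<partial>M) = (\<integral>\<^sup>+x. ennreal c0 + ennreal c1 * ennreal (f x) \<partial>M)"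
    using assms by (intro nn_integral_cong) (simp add: ennreal_plus ennreal_mult)
  also have "\<dots> = ennreal c0 + ennreal c1 * (\<integral>\<^sup>+x. ennreal (f x) \<partial>M)"
    by (simp add: nn_integral_add nn_integral_cmult emeasure_space_1)
  finally show ?thesis .
qed

lemma interval_integral_fluct_le:
  assumes K: "0 < K" and eps: "0 < \<epsilon>" "\<epsilon> < a"
  shows "\<bar>LBINT u=\<epsilon>..a. fluct K N Bt lt u\<bar> \<le> ((2 + 3 / (2 * sqrt \<epsilon>) + (a - \<epsilon>)) / 2) / sqrt (real K)"
proof -
  interpret D: prob_space "data_measure K N" by (rule prob_space_data_measure)
  interpret pair_sigma_finite lborel "data_measure K N" ..
  define c0 where "c0 = (2 + (a - \<epsilon>)) / (2 * sqrt (real K))"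
  define c1 where "c1 = 3 / (2 * real K * sqrt \<epsilon>) / (2 * sqrt (real K))"
  define l1_norm where "l1_norm \<omega> = (\<Sum>k<K. \<bar>fst (snd (snd \<omega>)) k\<bar>)" for \<omega> :: disorder
  note [measurable] = measurable_gibbs_fluct
  have fluct_nonneg: "0 \<le> fluct K N Bt lt u" for u
    unfolding fluct_eq_integral_gibbs_fluct by (rule integral_nonneg_AE) (simp add: gibbs_fluct_nonneg)
  have "ennreal (LBINT u=\<epsilon>..a. fluct K N Bt lt u)
      \<le> (\<integral>\<^sup>+u. ennreal (fluct K N Bt lt u) * indicator {\<epsilon>..a} u \<partial>lborel)"
    using eps by (intro ennreal_interval_integral_le_nn_integral fluct_nonneg) simp
  also have "\<dots> \<le> (\<integral>\<^sup>+u. (\<integral>\<^sup>+\<omega>. ennreal (gibbs_fluct K N Bt lt u \<omega>) \<partial>data_measure K N) * indicator {\<epsilon>..a} u \<partial>lborel)"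
    unfolding fluct_eq_integral_gibbs_fluct
    by (intro nn_integral_mono mult_right_mono ennreal_integral_le_nn_integral gibbs_fluct_nonneg) simp
  also have "\<dots> = (\<integral>\<^sup>+\<omega>. (\<integral>\<^sup>+u. ennreal (gibbs_fluct K N Bt lt u \<omega>) * indicator {\<epsilon>..a} u \<partial>lborel) \<partial>data_measure K N)"
    by (subst Fubini') (simp_all add: nn_integral_multc)
  also have "\<dots> \<le> (\<integral>\<^sup>+\<omega>. ennreal (c0 + c1 * l1_norm \<omega>) \<partial>data_measure K N)"
  proof (rule nn_integral_mono)
    fix \<omega> :: disorder
    have "c0 + c1 * l1_norm \<omega> = (2 + 3 * l1_norm \<omega> / (2 * real K * sqrt \<epsilon>) + (a - \<epsilon>)) / (2 * sqrt (real K))"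
      unfolding c0_def c1_def using K eps by (simp add: field_simps)
    then show "(\<integral>\<^sup>+u. ennreal (gibbs_fluct K N Bt lt u \<omega>) * indicator {\<epsilon>..a} u \<partial>lborel) \<le> ennreal (c0 + c1 * l1_norm \<omega>)"
      using nn_integral_gibbs_fluct_le[OF K eps] unfolding l1_norm_def by (cases \<omega>) simp
  qed
  also have "\<dots> = ennreal c0 + ennreal c1 * (\<integral>\<^sup>+\<omega>. ennreal (l1_norm \<omega>) \<partial>data_measure K N)"
    unfolding l1_norm_def c0_def c1_def using eps
    by (intro D.nn_integral_affine) (auto simp: data_measure_def gauss_vec_def)
  also have "\<dots> \<le> ennreal c0 + ennreal c1 * ennreal (real K)"
    unfolding l1_norm_def by (intro add_left_mono mult_left_mono nn_integral_l1_norm_field_le) simp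
  also have "\<dots> = ennreal (((2 + 3 / (2 * sqrt \<epsilon>) + (a - \<epsilon>)) / 2) / sqrt (real K))"
    unfolding c0_def c1_def using K eps by (simp flip: ennreal_plus ennreal_mult add: field_simps)
  finally have "(LBINT u=\<epsilon>..a. fluct K N Bt lt u) \<le> ((2 + 3 / (2 * sqrt \<epsilon>) + (a - \<epsilon>)) / 2) / sqrt (real K)"
    using eps by (subst (asm) ennreal_le_iff) auto
  moreover have "0 \<le> (LBINT u=\<epsilon>..a. fluct K N Bt lt u)"
    using eps fluct_nonneg
    by (simp add: interval_integral_Icc set_lebesgue_integral_def integral_nonneg_AE)
  ultimately show ?thesis by simp
qed

theorem lemma5:
  fixes \<beta> \<sigma> m \<epsilon> a t :: real
    and Bf lf :: "real \<Rightarrow> real"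
  assumes beta_pos: "\<beta> > 0"
    and sigma_pos: "\<sigma> > 0"
    and m_range: "0 \<le> m" "m \<le> 1"
    and C1: "C1_on {0..1} Bf" "C1_on {0..1} lf"
    and B0: "Bf 0 = 0" and l0: "lf 0 = (1/\<sigma>\<^sup>2) / (1 + \<beta> * (1/\<sigma>\<^sup>2) * (1 - m))"
    and B1: "Bf 1 = 1/\<sigma>\<^sup>2" and l1: "lf 1 = 0"
    and B_incr: "mono_on {0..1} Bf"
    and l_decr: "antimono_on {0..1} lf"
    and constraint: "\<And>s. s \<in> {0..1} \<Longrightarrow>
        Bf s / (1 + \<beta> * Bf s * (1 - m)) + lf s = (1/\<sigma>\<^sup>2) / (1 + \<beta> * (1/\<sigma>\<^sup>2) * (1 - m))"
    and eps: "0 < \<epsilon>" "\<epsilon> < a"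
    and t_range: "t \<in> {0..1}"
  shows "\<exists>C K0. \<forall>K N. K \<ge> K0 \<longrightarrow> real K = \<beta> * real N \<longrightarrow>
            \<bar>LBINT u=\<epsilon>..a. fluct K N (Bf t) (lf t) u\<bar> \<le> C / sqrt (real K)"
proof -
  text \<open>The bound is uniform in N, B(t) and \<lambda>(t).\<close>
  have "\<bar>LBINT u=\<epsilon>..a. fluct K N (Bf t) (lf t) u\<bar> \<le> ((2 + 3 / (2 * sqrt \<epsilon>) + (a - \<epsilon>)) / 2) / sqrt (real K)"
    if "K \<ge> 1" for K N
    using interval_integral_fluct_le[OF _ eps, of K N] that by simp
  then show ?thesis by blast
qed

end
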